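(* Let $R$ be a unital associative ring, $n\ge1$, $D_1,D_2$ invertible diagonal $n\times n$ matrices over $R$, and $A,B\in\widehat M_n(R)$. Then $B=D_1^{-1}AD_2$ holds if and only if there is $x\in R^*$ such that $D_1=D_2=xI$ (with $I$ the $n\times n$ identity matrix) and $B=x^{-1}Ax$ (entrywise left multiplication by $x^{-1}$ and right multiplication by $x$). In particular, $A\sim B$ if and only if there is $x\in R^*$ with $B=x^{-1}Ax$.
   Context: $R^*$ denotes the units of $R$. $\widehat M_n(R)=\{A=\{a_{j,k}\}\in M_n(R): a_{1,k}=a_{k,1}=1\text{ for }1\le k\le n\}$. $A\sim B$ means $B=D_1^{-1}AD_2$ for some invertible diagonal matrices $D_1,D_2$. *)

theory Defs
  imports "Jordan_Normal_Form.Matrix"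
begin

text \<open>Matrices over a (not necessarily commutative) unital ring are Jordan_Normal_Form
  matrices; rows/columns are indexed 0..n-1, so the paper's index 1 is index 0 here.\<close>

definition hatM :: "nat \<Rightarrow> 'a::ring_1 mat \<Rightarrow> bool" where
  "hatM n A \<longleftrightarrow> A \<in> carrier_mat n n \<and> (\<forall>k<n. A $$ (0,k) = 1 \<and> A $$ (k,0) = 1)"

definition inv_diag :: "nat \<Rightarrow> 'a::ring_1 mat \<Rightarrow> bool" where
  "inv_diag n D \<longleftrightarrow> D \<in> carrier_mat n n \<and> diagonal_mat D \<and> invertible_mat D"

definition diag_equiv :: "nat \<Rightarrow> 'a::ring_1 mat \<Rightarrow> 'a mat \<Rightarrow> bool" where
  "diag_equiv n A B \<longleftrightarrow> (\<exists>D1 D2 E1. inv_diag n D1 \<and> inv_diag n D2 \<and>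
      E1 \<in> carrier_mat n n \<and> inverts_mat D1 E1 \<and> inverts_mat E1 D1 \<and> B = E1 * A * D2)"

end

theory Submission
  imports Defs
begin

text \<open>Multiplying by an invertible diagonal matrix scales rows or columns by units, so
  B = E1 A D2 reads entrywise as B(i,j) = e_i A(i,j) f_j with e_i the inverse of the
  i-th diagonal entry d_i of D1. Since the first row and column of A and B consist of ones,
  e_0 f_k = 1 and e_k f_0 = 1 for all k; as left and right inverses of a unit agree, all f_k
  equal d_0, all e_k equal e_0, and all d_k equal d_0. Hence D1 = D2 = d_0 I and
  B = d_0^{-1} A d_0.\<close>

lemma left_inverse_eq_right_inverse:
  fixes a b c :: "'a::monoid_mult"
  assumes "a * b = 1" and "b * c = 1"
  shows "a = c"
  by (metis assms mult.assoc mult_1_left mult_1_right)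

lemma units_const_if_border_inverse:
  fixes d e f :: "nat \<Rightarrow> 'a::monoid_mult"
  assumes "0 < n"
    and de: "\<And>i. i < n \<Longrightarrow> d i * e i = 1 \<and> e i * d i = 1"
    and border: "\<And>k. k < n \<Longrightarrow> e 0 * f k = 1 \<and> e k * f 0 = 1"
    and "k < n"
  shows "d k = d 0" and "e k = e 0" and "f k = d 0"
proof -
  have f: "f i = d 0" if "i < n" for i
    using left_inverse_eq_right_inverse de[OF \<open>0 < n\<close>] border[OF that] by metis
  show "f k = d 0" using f[OF \<open>k < n\<close>] .
  have "e k * d 0 = 1" using border[OF \<open>k < n\<close>] f[OF \<open>0 < n\<close>] by simp
  then show ek: "e k = e 0"
    using left_inverse_eq_right_inverse de[OF \<open>0 < n\<close>] by metis
  show "d k = d 0"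
    using left_inverse_eq_right_inverse[of "d 0" "e 0" "d k"] de[OF \<open>0 < n\<close>] de[OF \<open>k < n\<close>] ek
    by simp
qed

lemma diagonal_mat_mult_index_left:
  fixes D M :: "'a::semiring_0 mat"
  assumes "D \<in> carrier_mat n n" "diagonal_mat D" "M \<in> carrier_mat n m" "i < n" "j < m"
  shows "(D * M) $$ (i,j) = D $$ (i,i) * M $$ (i,j)"
proof -
  have "(D * M) $$ (i,j) = (\<Sum>k\<in>{0..<n}. D $$ (i,k) * M $$ (k,j))"
    using assms by (simp add: scalar_prod_def)
  also have "\<dots> = D $$ (i,i) * M $$ (i,j) + (\<Sum>k\<in>{0..<n}-{i}. D $$ (i,k) * M $$ (k,j))"
    using assms by (simp add: sum.remove)
  also have "(\<Sum>k\<in>{0..<n}-{i}. D $$ (i,k) * M $$ (k,j)) = 0"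
    using assms by (intro sum.neutral) (auto simp: diagonal_mat_def)
  finally show ?thesis by simp
qed

lemma diagonal_mat_mult_index_right:
  fixes D M :: "'a::semiring_0 mat"
  assumes "D \<in> carrier_mat n n" "diagonal_mat D" "M \<in> carrier_mat m n" "i < m" "j < n"
  shows "(M * D) $$ (i,j) = M $$ (i,j) * D $$ (j,j)"
proof -
  have "(M * D) $$ (i,j) = (\<Sum>k\<in>{0..<n}. M $$ (i,k) * D $$ (k,j))"
    using assms by (simp add: scalar_prod_def)
  also have "\<dots> = M $$ (i,j) * D $$ (j,j) + (\<Sum>k\<in>{0..<n}-{j}. M $$ (i,k) * D $$ (k,j))"
    using assms by (simp add: sum.remove)
  also have "(\<Sum>k\<in>{0..<n}-{j}. M $$ (i,k) * D $$ (k,j)) = 0"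
    using assms by (intro sum.neutral) (auto simp: diagonal_mat_def)
  finally show ?thesis by simp
qed

lemma diagonal_mat_mult_index_both:
  fixes D1 D2 M :: "'a::semiring_0 mat"
  assumes "D1 \<in> carrier_mat n n" "diagonal_mat D1" "D2 \<in> carrier_mat m m" "diagonal_mat D2"
    and "M \<in> carrier_mat n m" "i < n" "j < m"
  shows "(D1 * M * D2) $$ (i,j) = D1 $$ (i,i) * M $$ (i,j) * D2 $$ (j,j)"
  using assms diagonal_mat_mult_index_right[of D2 m "D1 * M" n i j]
    diagonal_mat_mult_index_left[of D1 n M m i j]
  by simp

lemma inverse_diagonal_mat_index:
  fixes D E :: "'a::semiring_1 mat"
  assumes "D \<in> carrier_mat n n" "diagonal_mat D" "E \<in> carrier_mat n n"
    and "D * E = 1\<^sub>m n" "E * D = 1\<^sub>m n" "i < n"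
  shows "D $$ (i,i) * E $$ (i,i) = 1" and "E $$ (i,i) * D $$ (i,i) = 1"
  using assms diagonal_mat_mult_index_left[of D n E n i i]
    diagonal_mat_mult_index_right[of D n E n i i]
  by auto

lemma inverse_diagonal_mat_diagonal:
  fixes D E :: "'a::semiring_1 mat"
  assumes "D \<in> carrier_mat n n" "diagonal_mat D" "E \<in> carrier_mat n n"
    and "D * E = 1\<^sub>m n" "E * D = 1\<^sub>m n"
  shows "diagonal_mat E"
  unfolding diagonal_mat_def
proof (intro allI impI)
  fix i j assume ij: "i < dim_row E" "j < dim_col E" "i \<noteq> j"
  then have "i < n" "j < n" using assms(3) by auto
  have "D $$ (i,i) * E $$ (i,j) = 0"
    using diagonal_mat_mult_index_left[OF assms(1,2,3) \<open>i < n\<close> \<open>j < n\<close>] assms(4) ij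
      \<open>i < n\<close> \<open>j < n\<close>
    by simp
  then have "(E $$ (i,i) * D $$ (i,i)) * E $$ (i,j) = 0" by (simp add: mult.assoc)
  then show "E $$ (i,j) = 0"
    using inverse_diagonal_mat_index(2)[OF assms \<open>i < n\<close>] by simp
qed

lemma diagonal_mat_eq_smult_one_mat:
  fixes D :: "'a::semiring_1 mat"
  assumes "D \<in> carrier_mat n n" "diagonal_mat D" "\<And>i. i < n \<Longrightarrow> D $$ (i,i) = x"
  shows "D = x \<cdot>\<^sub>m 1\<^sub>m n"
  using assms by (intro eq_matI) (auto simp: diagonal_mat_def)

lemma smult_one_mat_mult:
  fixes x y :: "'a::semiring_1"
  shows "(x \<cdot>\<^sub>m 1\<^sub>m n) * (y \<cdot>\<^sub>m 1\<^sub>m n) = (x * y) \<cdot>\<^sub>m 1\<^sub>m n"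
proof (rule eq_matI)
  fix i j assume "i < dim_row ((x * y) \<cdot>\<^sub>m 1\<^sub>m n)" "j < dim_col ((x * y) \<cdot>\<^sub>m 1\<^sub>m n)"
  then have "i < n" "j < n" by auto
  have "diagonal_mat (x \<cdot>\<^sub>m 1\<^sub>m n)" by (auto simp: diagonal_mat_def)
  then show "((x \<cdot>\<^sub>m 1\<^sub>m n) * (y \<cdot>\<^sub>m 1\<^sub>m n)) $$ (i,j) = ((x * y) \<cdot>\<^sub>m 1\<^sub>m n) $$ (i,j)"
    using diagonal_mat_mult_index_left[of "x \<cdot>\<^sub>m 1\<^sub>m n" n "y \<cdot>\<^sub>m 1\<^sub>m n" n i j]
      \<open>i < n\<close> \<open>j < n\<close>
    by simp
qed auto

lemma conj_by_diagonal_hatM_iff: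
  fixes A B D1 D2 E1 :: "'a::ring_1 mat"
  assumes "n \<ge> 1"
    and D1: "inv_diag n D1" and D2: "inv_diag n D2"
    and E1: "E1 \<in> carrier_mat n n" "inverts_mat D1 E1" "inverts_mat E1 D1"
    and A: "hatM n A" and B: "hatM n B"
  shows "B = E1 * A * D2 \<longleftrightarrow>
           (\<exists>x y. x * y = 1 \<and> y * x = 1 \<and> D1 = x \<cdot>\<^sub>m 1\<^sub>m n \<and> D2 = x \<cdot>\<^sub>m 1\<^sub>m n \<and>
                  B = mat n n (\<lambda>(i,j). y * A $$ (i,j) * x))"
proof -
  have "0 < n" using \<open>n \<ge> 1\<close> by simp
  have D1c: "D1 \<in> carrier_mat n n" "diagonal_mat D1" and D2c: "D2 \<in> carrier_mat n n" "diagonal_mat D2"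
    using D1 D2 by (auto simp: inv_diag_def)
  have D1E1: "D1 * E1 = 1\<^sub>m n" "E1 * D1 = 1\<^sub>m n"
    using E1 D1c by (auto simp: inverts_mat_def)
  have Ac: "A \<in> carrier_mat n n" and A1: "\<And>k. k < n \<Longrightarrow> A $$ (0,k) = 1 \<and> A $$ (k,0) = 1"
    using A by (auto simp: hatM_def)
  have Bc: "B \<in> carrier_mat n n" and B1: "\<And>k. k < n \<Longrightarrow> B $$ (0,k) = 1 \<and> B $$ (k,0) = 1"
    using B by (auto simp: hatM_def)
  define d where "d i = D1 $$ (i,i)" for i
  define e where "e i = E1 $$ (i,i)" for i
  define f where "f i = D2 $$ (i,i)" for i
  have de: "d i * e i = 1 \<and> e i * d i = 1" if "i < n" for i
    using inverse_diagonal_mat_index[OF D1c E1(1) D1E1 that] by (simp add: d_def e_def)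
  have entry: "(E1 * A * D2) $$ (i,j) = e i * A $$ (i,j) * f j" if "i < n" "j < n" for i j
    using diagonal_mat_mult_index_both[OF E1(1) inverse_diagonal_mat_diagonal[OF D1c E1(1) D1E1]
        D2c Ac that]
    by (simp add: e_def f_def)
  have prod_c: "E1 * A * D2 \<in> carrier_mat n n" using E1(1) Ac D2c by auto
  show ?thesis
  proof
    assume eq: "B = E1 * A * D2"
    have border: "e 0 * f k = 1 \<and> e k * f 0 = 1" if "k < n" for k
      using entry[OF \<open>0 < n\<close> that] entry[OF that \<open>0 < n\<close>] A1[OF that] B1[OF that] eq
      by simp
    have const: "d k = d 0" "e k = e 0" "f k = d 0" if "k < n" for k
      using units_const_if_border_inverse[of n d e f k, OF \<open>0 < n\<close> de border that] by auto
    show "\<exists>x y. x * y = 1 \<and> y * x = 1 \<and> D1 = x \<cdot>\<^sub>m 1\<^sub>m n \<and> D2 = x \<cdot>\<^sub>m 1\<^sub>m n \<and>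
            B = mat n n (\<lambda>(i,j). y * A $$ (i,j) * x)"
    proof (intro exI conjI)
      show "d 0 * e 0 = 1" "e 0 * d 0 = 1" using de[OF \<open>0 < n\<close>] by auto
      show "D1 = d 0 \<cdot>\<^sub>m 1\<^sub>m n"
        using const(1) by (intro diagonal_mat_eq_smult_one_mat[OF D1c]) (metis d_def)
      show "D2 = d 0 \<cdot>\<^sub>m 1\<^sub>m n"
        using const(3) by (intro diagonal_mat_eq_smult_one_mat[OF D2c]) (metis f_def)
      show "B = mat n n (\<lambda>(i,j). e 0 * A $$ (i,j) * d 0)"
      proof (rule eq_matI)
        fix i j assume "i < dim_row (mat n n (\<lambda>(i,j). e 0 * A $$ (i,j) * d 0))"
          "j < dim_col (mat n n (\<lambda>(i,j). e 0 * A $$ (i,j) * d 0))"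
        then have ij: "i < n" "j < n" by auto
        show "B $$ (i,j) = mat n n (\<lambda>(i,j). e 0 * A $$ (i,j) * d 0) $$ (i,j)"
          using ij by (simp add: eq entry const(2)[OF ij(1)] const(3)[OF ij(2)])
      qed (use Bc in auto)
    qed
  next
    assume "\<exists>x y. x * y = 1 \<and> y * x = 1 \<and> D1 = x \<cdot>\<^sub>m 1\<^sub>m n \<and> D2 = x \<cdot>\<^sub>m 1\<^sub>m n \<and>
              B = mat n n (\<lambda>(i,j). y * A $$ (i,j) * x)"
    then obtain x y where xy: "x * y = 1" "y * x = 1" "D1 = x \<cdot>\<^sub>m 1\<^sub>m n" "D2 = x \<cdot>\<^sub>m 1\<^sub>m n"
      and B_eq: "B = mat n n (\<lambda>(i,j). y * A $$ (i,j) * x)" by blast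
    have dx: "d i = x" and fx: "f i = x" if "i < n" for i
      using xy that by (auto simp: d_def f_def)
    have ey: "e i = y" if "i < n" for i
      using left_inverse_eq_right_inverse[of y x "e i"] xy de[OF that] dx[OF that]
      by simp
    show "B = E1 * A * D2"
    proof (rule eq_matI)
      fix i j assume "i < dim_row (E1 * A * D2)" "j < dim_col (E1 * A * D2)"
      then have ij: "i < n" "j < n" using prod_c by auto
      show "B $$ (i,j) = (E1 * A * D2) $$ (i,j)"
        using ij by (simp add: B_eq entry ey[OF ij(1)] fx[OF ij(2)])
    qed (use B_eq prod_c in auto)
  qed
qed

lemma inv_diag_smult_one_mat:
  fixes x y :: "'a::ring_1"
  assumes "x * y = 1" "y * x = 1"
  shows "inv_diag n (x \<cdot>\<^sub>m 1\<^sub>m n)"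
    and "inverts_mat (x \<cdot>\<^sub>m 1\<^sub>m n) (y \<cdot>\<^sub>m 1\<^sub>m n)"
    and "inverts_mat (y \<cdot>\<^sub>m 1\<^sub>m n) (x \<cdot>\<^sub>m 1\<^sub>m n)"
proof -
  show XY: "inverts_mat (x \<cdot>\<^sub>m 1\<^sub>m n) (y \<cdot>\<^sub>m 1\<^sub>m n)"
    and YX: "inverts_mat (y \<cdot>\<^sub>m 1\<^sub>m n) (x \<cdot>\<^sub>m 1\<^sub>m n)"
    using assms by (auto simp: inverts_mat_def smult_one_mat_mult intro!: eq_matI)
  show "inv_diag n (x \<cdot>\<^sub>m 1\<^sub>m n)"
    unfolding inv_diag_def invertible_mat_def using XY YX
    by (auto simp: diagonal_mat_def)
qed

theorem lemma3:
  fixes A B D1 D2 E1 :: "'a::ring_1 mat" and n :: nat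
  assumes "n \<ge> 1"
    and "inv_diag n D1" and "inv_diag n D2"
    and "E1 \<in> carrier_mat n n" and "inverts_mat D1 E1" and "inverts_mat E1 D1"
    and "hatM n A" and "hatM n B"
  shows "(B = E1 * A * D2 \<longleftrightarrow>
           (\<exists>x y. x * y = 1 \<and> y * x = 1 \<and> D1 = x \<cdot>\<^sub>m 1\<^sub>m n \<and> D2 = x \<cdot>\<^sub>m 1\<^sub>m n \<and>
                  B = mat n n (\<lambda>(i,j). y * A $$ (i,j) * x)))
       \<and> (diag_equiv n A B \<longleftrightarrow>
           (\<exists>x y. x * y = 1 \<and> y * x = 1 \<and> B = mat n n (\<lambda>(i,j). y * A $$ (i,j) * x)))"
proof (intro conjI)
  note conj_iff = conj_by_diagonal_hatM_iff[OF \<open>n \<ge> 1\<close> _ _ _ _ _ \<open>hatM n A\<close> \<open>hatM n B\<close>]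
  show "B = E1 * A * D2 \<longleftrightarrow>
      (\<exists>x y. x * y = 1 \<and> y * x = 1 \<and> D1 = x \<cdot>\<^sub>m 1\<^sub>m n \<and> D2 = x \<cdot>\<^sub>m 1\<^sub>m n \<and>
             B = mat n n (\<lambda>(i,j). y * A $$ (i,j) * x))"
    by (rule conj_iff[OF assms(2-6)])
  show "diag_equiv n A B \<longleftrightarrow>
      (\<exists>x y. x * y = 1 \<and> y * x = 1 \<and> B = mat n n (\<lambda>(i,j). y * A $$ (i,j) * x))"
  proof
    assume "diag_equiv n A B"
    then show "\<exists>x y. x * y = 1 \<and> y * x = 1 \<and> B = mat n n (\<lambda>(i,j). y * A $$ (i,j) * x)"
      using conj_iff unfolding diag_equiv_def by blast
  next
    assume "\<exists>x y. x * y = 1 \<and> y * x = 1 \<and> B = mat n n (\<lambda>(i,j). y * A $$ (i,j) * x)"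
    then obtain x y where xy: "x * y = 1" "y * x = 1"
      and "B = mat n n (\<lambda>(i,j). y * A $$ (i,j) * x)" by blast
    note scalar = inv_diag_smult_one_mat[OF xy, of n]
    have "B = (y \<cdot>\<^sub>m 1\<^sub>m n) * A * (x \<cdot>\<^sub>m 1\<^sub>m n)"
      using conj_iff[OF scalar(1,1)] scalar(2,3) xy \<open>B = _\<close> by auto
    then show "diag_equiv n A B"
      unfolding diag_equiv_def using scalar
      by (intro exI[of _ "x \<cdot>\<^sub>m 1\<^sub>m n"] exI[of _ "y \<cdot>\<^sub>m 1\<^sub>m n"]) auto
  qed
qed

end
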